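(* Let $T$ be a tree. Then (1) $\chi_{ei}(T)=1$ if and only if $\operatorname{diam}(T)\le 2$; and (2) $\chi_{ei}(T)=2$ if and only if $\operatorname{diam}(T)\ge 3$.
   Context: All graphs are finite and simple. A path $P_4$ in $G$ is a sequence $uxyv$ of four distinct vertices with $ux,xy,yv\in E(G)$; $u$ and $v$ are its end vertices. An $e$-injective $k$-coloring of a graph $G$ is a function $f:V(G)\to\{1,\dots,k\}$ such that $f(u)\ne f(v)$ whenever $u$ and $v$ are the end vertices of some path $P_4=uxyv$ in $G$ (the coloring need not be proper). The $e$-injective chromatic number $\chi_{ei}(G)$ is the minimum positive integer $k$ such that $G$ has an $e$-injective $k$-coloring. $\operatorname{diam}(T)$ denotes the diameter of $T$. *)

theory Defs
  imports Main
begin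

definition simple_graph :: "'a set \<Rightarrow> ('a \<Rightarrow> 'a \<Rightarrow> bool) \<Rightarrow> bool" where
  "simple_graph V E \<longleftrightarrow> finite V \<and> (\<forall>u v. E u v \<longrightarrow> u \<in> V \<and> v \<in> V)
     \<and> (\<forall>u v. E u v \<longrightarrow> E v u) \<and> (\<forall>u. \<not> E u u)"

definition walk :: "'a set \<Rightarrow> ('a \<Rightarrow> 'a \<Rightarrow> bool) \<Rightarrow> 'a list \<Rightarrow> bool" where
  "walk V E xs \<longleftrightarrow> xs \<noteq> [] \<and> set xs \<subseteq> V \<and> (\<forall>i. Suc i < length xs \<longrightarrow> E (xs ! i) (xs ! Suc i))"

definition connected_graph :: "'a set \<Rightarrow> ('a \<Rightarrow> 'a \<Rightarrow> bool) \<Rightarrow> bool" where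
  "connected_graph V E \<longleftrightarrow> (\<forall>u\<in>V. \<forall>v\<in>V. \<exists>xs. walk V E xs \<and> hd xs = u \<and> last xs = v)"

definition has_cycle :: "'a set \<Rightarrow> ('a \<Rightarrow> 'a \<Rightarrow> bool) \<Rightarrow> bool" where
  "has_cycle V E \<longleftrightarrow> (\<exists>xs. walk V E xs \<and> distinct xs \<and> length xs \<ge> 3 \<and> E (last xs) (hd xs))"

definition is_tree :: "'a set \<Rightarrow> ('a \<Rightarrow> 'a \<Rightarrow> bool) \<Rightarrow> bool" where
  "is_tree V E \<longleftrightarrow> simple_graph V E \<and> V \<noteq> {} \<and> connected_graph V E \<and> \<not> has_cycle V E"

definition gdist :: "'a set \<Rightarrow> ('a \<Rightarrow> 'a \<Rightarrow> bool) \<Rightarrow> 'a \<Rightarrow> 'a \<Rightarrow> nat" where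
  "gdist V E u v = (LEAST n. \<exists>xs. walk V E xs \<and> hd xs = u \<and> last xs = v \<and> length xs = Suc n)"

definition diam :: "'a set \<Rightarrow> ('a \<Rightarrow> 'a \<Rightarrow> bool) \<Rightarrow> nat" where
  "diam V E = Max {gdist V E u v | u v. u \<in> V \<and> v \<in> V}"

definition is_P4 :: "('a \<Rightarrow> 'a \<Rightarrow> bool) \<Rightarrow> 'a \<Rightarrow> 'a \<Rightarrow> 'a \<Rightarrow> 'a \<Rightarrow> bool" where
  "is_P4 E u x y v \<longleftrightarrow> distinct [u, x, y, v] \<and> E u x \<and> E x y \<and> E y v"

definition e_injective_coloring :: "'a set \<Rightarrow> ('a \<Rightarrow> 'a \<Rightarrow> bool) \<Rightarrow> nat \<Rightarrow> ('a \<Rightarrow> nat) \<Rightarrow> bool" where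
  "e_injective_coloring V E k f \<longleftrightarrow> f ` V \<subseteq> {1..k}
     \<and> (\<forall>u x y v. is_P4 E u x y v \<longrightarrow> f u \<noteq> f v)"

definition chi_ei :: "'a set \<Rightarrow> ('a \<Rightarrow> 'a \<Rightarrow> bool) \<Rightarrow> nat" where
  "chi_ei V E = (LEAST k. k > 0 \<and> (\<exists>f. e_injective_coloring V E k f))"

end

(*
  A tree has no closed walk of odd length, since such a walk contains an odd cycle.  Hence the
  distance from a fixed root changes parity along every edge, so colouring each vertex by the
  parity of its distance is e-injective: the ends of a P4 are three edges apart.  Thus
  chi_ei T <= 2, and chi_ei T = 1 exactly when T contains no P4.  In a tree this happens exactly
  when diam T <= 2: the first four vertices of a shortest walk of length diam T >= 3 form a P4,
  while the ends of a P4 are at odd distance, and distance 1 would close the P4 into a 4-cycle.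
*)
theory Submission
  imports Defs
begin

lemma walk_iff_successively:
  "walk V E xs \<longleftrightarrow> xs \<noteq> [] \<and> set xs \<subseteq> V \<and> successively E xs"
  by (simp add: walk_def successively_conv_nth)

lemma walk_infix: "walk V E (xs @ ys @ zs) \<Longrightarrow> ys \<noteq> [] \<Longrightarrow> walk V E ys"
  by (simp add: walk_iff_successively successively_append_iff)

lemma walk_remove_loop:
  "walk V E (xs @ y # ys @ y # zs) \<Longrightarrow> walk V E (xs @ y # zs)"
  by (auto simp: walk_iff_successively successively_append_iff successively_Cons)

lemma walk_append:
  "walk V E xs \<Longrightarrow> walk V E ys \<Longrightarrow> E (last xs) (hd ys) \<Longrightarrow> walk V E (xs @ ys)"
  by (auto simp: walk_iff_successively successively_append_iff)

lemma walk_rev: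
  assumes "\<And>u v. E u v \<Longrightarrow> E v u"
  shows "walk V E (rev xs) \<longleftrightarrow> walk V E xs"
proof -
  have "(\<lambda>x y. E y x) = E" using assms by blast
  then show ?thesis by (simp only: walk_iff_successively successively_rev set_rev rev_is_Nil_conv)
qed

definition closed_walk :: "'a set \<Rightarrow> ('a \<Rightarrow> 'a \<Rightarrow> bool) \<Rightarrow> 'a list \<Rightarrow> bool" where
  "closed_walk V E xs \<longleftrightarrow> walk V E xs \<and> E (last xs) (hd xs)"

lemma has_cycle_iff_closed_walk:
  "has_cycle V E \<longleftrightarrow> (\<exists>xs. closed_walk V E xs \<and> distinct xs \<and> 3 \<le> length xs)"
  unfolding has_cycle_def closed_walk_def by blast

lemma closed_walk_Cons_iff: "closed_walk V E (x # xs) \<longleftrightarrow> walk V E (x # xs @ [x])"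
  using successively_append_iff[of E "x # xs" "[x]"]
  by (auto simp: closed_walk_def walk_iff_successively)

lemma walk_loop:
  "walk V E (xs @ y # ys @ y # zs) \<Longrightarrow> closed_walk V E (y # ys)"
  unfolding closed_walk_Cons_iff by (rule walk_infix[of V E xs _ zs]) simp_all

lemma closed_walk_remove_loop:
  assumes "closed_walk V E (xs @ y # ys @ y # zs)"
  shows "closed_walk V E (xs @ y # zs)"
proof -
  have "hd (xs @ y # zs) = hd (xs @ y # ys @ y # zs)" by (cases xs) simp_all
  moreover have "last (xs @ y # zs) = last (xs @ y # ys @ y # zs)" by (cases zs) simp_all
  moreover have "walk V E (xs @ y # zs)"
    using assms unfolding closed_walk_def by (blast intro: walk_remove_loop)
  ultimately show ?thesis using assms by (simp add: closed_walk_def)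
qed

lemma odd_closed_walk_imp_has_cycle:
  assumes "closed_walk V E xs" "odd (length xs)" "\<And>u. \<not> E u u"
  shows "has_cycle V E"
  using assms(1,2)
proof (induction "length xs" arbitrary: xs rule: less_induct)
  case less
  show ?case
  proof (cases "distinct xs")
    case True
    have "length xs \<noteq> 1"
      using less.prems(1) assms(3) by (auto simp: closed_walk_def length_Suc_conv)
    with \<open>odd (length xs)\<close> have "3 \<le> length xs" by presburger
    with True less.prems(1) show ?thesis by (auto simp: has_cycle_iff_closed_walk)
  next
    case False
    \<comment> \<open>a repeated vertex splits the closed walk into two shorter ones, one of odd length\<close>
    then obtain as y bs cs where xs: "xs = as @ y # bs @ y # cs"
      using not_distinct_decomp by fastforce
    have "length xs = length (y # bs) + length (as @ y # cs)" using xs by simp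
    with \<open>odd (length xs)\<close> consider "odd (length (y # bs))" | "odd (length (as @ y # cs))"
      by fastforce
    then show ?thesis
    proof cases
      case 1
      moreover have "closed_walk V E (y # bs)"
        using less.prems(1) xs walk_loop[of V E as y bs cs] by (simp add: closed_walk_def)
      ultimately show ?thesis using less.hyps[of "y # bs"] xs by simp
    next
      case 2
      moreover have "closed_walk V E (as @ y # cs)"
        using less.prems(1) xs by (auto intro: closed_walk_remove_loop)
      ultimately show ?thesis using less.hyps[of "as @ y # cs"] xs by simp
    qed
  qed
qed

lemma gdist_walk_exists:
  assumes "connected_graph V E" "u \<in> V" "v \<in> V"
  obtains xs where "walk V E xs" "hd xs = u" "last xs = v" "length xs = Suc (gdist V E u v)"
proof -
  obtain xs where xs: "walk V E xs" "hd xs = u" "last xs = v"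
    using assms unfolding connected_graph_def by blast
  then have "length xs = Suc (length xs - 1)" by (simp add: walk_def)
  with xs have "\<exists>n xs. walk V E xs \<and> hd xs = u \<and> last xs = v \<and> length xs = Suc n" by blast
  from LeastI_ex[OF this] show ?thesis using that unfolding gdist_def by blast
qed

lemma gdist_less_length:
  assumes "walk V E xs"
  shows "gdist V E (hd xs) (last xs) < length xs"
proof -
  have "length xs = Suc (length xs - 1)" using assms by (simp add: walk_def)
  then have "gdist V E (hd xs) (last xs) \<le> length xs - 1"
    unfolding gdist_def using assms by (intro Least_le) blast
  then show ?thesis using \<open>length xs = Suc (length xs - 1)\<close> by linarith
qed

lemma gdist_self: "u \<in> V \<Longrightarrow> gdist V E u u = 0"
  using gdist_less_length[of V E "[u]"] by (simp add: walk_def)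

lemma shortest_walk_distinct:
  assumes "walk V E xs" "length xs = Suc (gdist V E (hd xs) (last xs))"
  shows "distinct xs"
proof (rule ccontr)
  assume "\<not> distinct xs"
  then obtain as y bs cs where xs: "xs = as @ y # bs @ y # cs"
    using not_distinct_decomp by fastforce
  then have "walk V E (as @ y # cs)" using assms(1) walk_remove_loop by simp
  moreover have "hd (as @ y # cs) = hd xs" "last (as @ y # cs) = last xs"
    using xs by (cases as; cases cs; simp)+
  ultimately have "gdist V E (hd xs) (last xs) < length (as @ y # cs)"
    using gdist_less_length by metis
  with assms(2) xs show False by simp
qed

lemma gdist_adjacent_le:
  assumes "connected_graph V E" "r \<in> V" "a \<in> V" "b \<in> V" "E a b"
  shows "gdist V E r b \<le> Suc (gdist V E r a)"
proof -
  obtain p where p: "walk V E p" "hd p = r" "last p = a" "length p = Suc (gdist V E r a)"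
    using gdist_walk_exists assms(1-3) by metis
  have "walk V E (p @ [b])" using p assms(4,5) by (intro walk_append) (auto simp: walk_def)
  then have "gdist V E r b < length (p @ [b])"
    using gdist_less_length[of V E "p @ [b]"] p(1,2) by (simp add: walk_def)
  with p(4) show ?thesis by simp
qed

lemma
  assumes "is_tree V E"
  shows tree_finite: "finite V" and tree_nonempty: "V \<noteq> {}"
    and tree_connected: "connected_graph V E" and tree_acyclic: "\<not> has_cycle V E"
    and tree_edge_in_V: "E u v \<Longrightarrow> u \<in> V \<and> v \<in> V"
    and tree_edge_sym: "E u v \<Longrightarrow> E v u" and tree_irrefl: "\<not> E u u"
  using assms unfolding is_tree_def simple_graph_def by auto

lemma tree_gdist_adjacent_neq:
  assumes "is_tree V E" "r \<in> V" "E a b"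
  shows "gdist V E r a \<noteq> gdist V E r b"
proof
  assume eq: "gdist V E r a = gdist V E r b"
  have conn: "connected_graph V E" and ab: "a \<in> V" "b \<in> V"
    using tree_connected[OF assms(1)] tree_edge_in_V[OF assms(1) assms(3)] by simp_all
  obtain p where p: "walk V E p" "hd p = r" "last p = a" "length p = Suc (gdist V E r a)"
    using gdist_walk_exists conn assms(2) ab(1) by metis
  obtain q where q: "walk V E q" "hd q = r" "last q = b" "length q = Suc (gdist V E r b)"
    using gdist_walk_exists conn assms(2) ab(2) by metis
  then obtain q' where q': "q = r # q'" by (cases q) (auto simp: walk_def)
  have "q' \<noteq> []"
  proof
    assume "q' = []"
    with q q' eq p have "p = [r]" "a = r" "b = r" by (auto simp: length_Suc_conv)
    with assms(3) tree_irrefl[OF assms(1)] show False by simp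
  qed
  \<comment> \<open>shortest walks from r to a and to b close up, through the edge ab, to an odd closed walk\<close>
  have "walk V E (p @ rev q)" using p q \<open>q' \<noteq> []\<close> assms(3)
    by (intro walk_append) (simp_all add: walk_rev tree_edge_sym[OF assms(1)] hd_rev)
  then have "closed_walk V E (p @ rev q')"
    using p q' by (cases p) (simp_all add: closed_walk_Cons_iff walk_def)
  moreover have "odd (length (p @ rev q'))" using p q q' eq by simp
  ultimately have "has_cycle V E"
    using odd_closed_walk_imp_has_cycle tree_irrefl[OF assms(1)] by blast
  with tree_acyclic[OF assms(1)] show False ..
qed

lemma tree_gdist_adjacent_parity:
  assumes "is_tree V E" "r \<in> V" "E a b"
  shows "odd (gdist V E r a) \<noteq> odd (gdist V E r b)"
proof -
  have conn: "connected_graph V E" and ab: "a \<in> V" "b \<in> V"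
    using tree_connected[OF assms(1)] tree_edge_in_V[OF assms(1) assms(3)] by simp_all
  have "gdist V E r b \<le> Suc (gdist V E r a)" "gdist V E r a \<le> Suc (gdist V E r b)"
    using gdist_adjacent_le[OF conn assms(2)] ab assms(3) tree_edge_sym[OF assms(1)] by simp_all
  moreover have "gdist V E r a \<noteq> gdist V E r b" by (rule tree_gdist_adjacent_neq[OF assms])
  ultimately have "gdist V E r b = Suc (gdist V E r a) \<or> gdist V E r a = Suc (gdist V E r b)"
    by linarith
  then show ?thesis by auto
qed

lemma tree_P4_gdist_ge_3:
  assumes "is_tree V E" "is_P4 E u x y v"
  shows "3 \<le> gdist V E u v"
proof -
  have P4: "distinct [u, x, y, v]" "E u x" "E x y" "E y v"
    using assms(2) unfolding is_P4_def by blast+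
  have u: "u \<in> V" and v: "v \<in> V" using tree_edge_in_V[OF assms(1)] P4 by blast+
  have "odd (gdist V E u x)"
    using tree_gdist_adjacent_parity[OF assms(1) u P4(2)] gdist_self[OF u] by simp
  then have "even (gdist V E u y)" using tree_gdist_adjacent_parity[OF assms(1) u P4(3)] by simp
  then have "odd (gdist V E u v)" using tree_gdist_adjacent_parity[OF assms(1) u P4(4)] by simp
  moreover have "gdist V E u v \<noteq> 1"
  proof
    assume "gdist V E u v = 1"
    moreover obtain w where "walk V E w" "hd w = u" "last w = v" "length w = Suc (gdist V E u v)"
      using gdist_walk_exists[OF tree_connected[OF assms(1)] u v] .
    ultimately have "E u v" by (auto simp: length_Suc_conv walk_def)
    then have "closed_walk V E [u, x, y, v]"
      using P4 u v tree_edge_in_V[OF assms(1)] tree_edge_sym[OF assms(1)]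
      by (simp add: closed_walk_def walk_iff_successively)
    with P4(1) have "has_cycle V E"
      unfolding has_cycle_iff_closed_walk by (intro exI[of _ "[u, x, y, v]"]) simp
    with tree_acyclic[OF assms(1)] show False ..
  qed
  ultimately show ?thesis by (auto elim!: oddE)
qed

lemma gdist_ge_3_imp_P4:
  assumes "connected_graph V E" "u \<in> V" "v \<in> V" "3 \<le> gdist V E u v"
  shows "\<exists>a b c d. is_P4 E a b c d"
proof -
  obtain w where w: "walk V E w" "hd w = u" "last w = v" "length w = Suc (gdist V E u v)"
    using gdist_walk_exists assms(1-3) by metis
  then have "distinct w" using shortest_walk_distinct by metis
  obtain a b c d rest where "w = a # b # c # d # rest"
  proof -
    have "Suc (Suc (Suc (Suc 0))) \<le> length w" using w(4) assms(4) by simp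
    then show ?thesis using that by (auto simp: Suc_le_length_iff)
  qed
  with w(1) \<open>distinct w\<close> have "is_P4 E a b c d"
    by (simp add: is_P4_def walk_iff_successively)
  then show ?thesis by blast
qed

lemma diam_eq_Max_image: "diam V E = Max ((\<lambda>(u, v). gdist V E u v) ` (V \<times> V))"
proof -
  have "{gdist V E u v | u v. u \<in> V \<and> v \<in> V} = (\<lambda>(u, v). gdist V E u v) ` (V \<times> V)"
    by auto
  then show ?thesis unfolding diam_def by simp
qed

lemma gdist_le_diam:
  assumes "finite V" "u \<in> V" "v \<in> V"
  shows "gdist V E u v \<le> diam V E"
  unfolding diam_eq_Max_image
  by (rule Max_ge) (use assms in \<open>auto intro: rev_image_eqI[of "(u, v)"]\<close>)

lemma diam_attained:
  assumes "finite V" "V \<noteq> {}"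
  obtains u v where "u \<in> V" "v \<in> V" "diam V E = gdist V E u v"
proof -
  have "diam V E \<in> (\<lambda>(u, v). gdist V E u v) ` (V \<times> V)"
    unfolding diam_eq_Max_image using assms by (intro Max_in) auto
  then obtain u v where "u \<in> V" "v \<in> V" "diam V E = gdist V E u v" by auto
  then show ?thesis by (rule that)
qed

lemma tree_has_P4_iff_diam_ge_3:
  assumes "is_tree V E"
  shows "(\<exists>u x y v. is_P4 E u x y v) \<longleftrightarrow> 3 \<le> diam V E"
proof
  assume "\<exists>u x y v. is_P4 E u x y v"
  then obtain u x y v where P4: "is_P4 E u x y v" by blast
  then have "u \<in> V" "v \<in> V" using tree_edge_in_V[OF assms] unfolding is_P4_def by blast+
  with tree_finite[OF assms] have "gdist V E u v \<le> diam V E" by (rule gdist_le_diam)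
  with tree_P4_gdist_ge_3[OF assms P4] show "3 \<le> diam V E" by simp
next
  assume "3 \<le> diam V E"
  moreover obtain u v where "u \<in> V" "v \<in> V" "diam V E = gdist V E u v"
    using diam_attained[OF tree_finite[OF assms] tree_nonempty[OF assms]] .
  ultimately show "\<exists>u x y v. is_P4 E u x y v"
    using gdist_ge_3_imp_P4[OF tree_connected[OF assms]] by simp
qed

lemma parity_coloring_e_injective:
  fixes d :: "'a \<Rightarrow> nat"
  assumes "\<And>a b. E a b \<Longrightarrow> odd (d a) \<noteq> odd (d b)"
  shows "e_injective_coloring V E 2 (\<lambda>w. if odd (d w) then 2 else 1)"
  unfolding e_injective_coloring_def is_P4_def using assms by fastforce

lemma tree_e_injective_2_coloring:
  assumes "is_tree V E"
  shows "\<exists>f. e_injective_coloring V E 2 f"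
proof -
  obtain r where "r \<in> V" using tree_nonempty[OF assms] by blast
  then have "e_injective_coloring V E 2 (\<lambda>w. if odd (gdist V E r w) then 2 else 1)"
    by (intro parity_coloring_e_injective tree_gdist_adjacent_parity[OF assms])
  then show ?thesis by blast
qed

lemma e_injective_1_coloring_iff:
  assumes "\<And>u v. E u v \<Longrightarrow> u \<in> V \<and> v \<in> V"
  shows "(\<exists>f. e_injective_coloring V E 1 f) \<longleftrightarrow> \<not> (\<exists>u x y v. is_P4 E u x y v)"
proof
  assume "\<exists>f. e_injective_coloring V E 1 f"
  then obtain f where f: "e_injective_coloring V E 1 f" ..
  show "\<not> (\<exists>u x y v. is_P4 E u x y v)"
  proof (intro notI, elim exE)
    fix u x y v assume P4: "is_P4 E u x y v"
    then have "u \<in> V" "v \<in> V" using assms unfolding is_P4_def by blast+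
    then have "f u = f v" using f unfolding e_injective_coloring_def by (simp add: image_subset_iff)
    with f P4 show False unfolding e_injective_coloring_def by blast
  qed
next
  assume "\<not> (\<exists>u x y v. is_P4 E u x y v)"
  then have "e_injective_coloring V E 1 (\<lambda>_. 1)" unfolding e_injective_coloring_def by auto
  then show "\<exists>f. e_injective_coloring V E 1 f" by blast
qed

lemma chi_ei_le:
  assumes "e_injective_coloring V E k f" "0 < k"
  shows "chi_ei V E \<le> k"
  unfolding chi_ei_def using assms by (intro Least_le) blast

lemma chi_ei_attained:
  assumes "e_injective_coloring V E k f" "0 < k"
  shows "0 < chi_ei V E \<and> (\<exists>g. e_injective_coloring V E (chi_ei V E) g)"
  unfolding chi_ei_def using assms by (intro LeastI) blast

theorem proposition2p5:
  fixes V :: "'a set" and E :: "'a \<Rightarrow> 'a \<Rightarrow> bool"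
  assumes "is_tree V E"
  shows "(chi_ei V E = 1 \<longleftrightarrow> diam V E \<le> 2) \<and> (chi_ei V E = 2 \<longleftrightarrow> diam V E \<ge> 3)"
proof -
  obtain f where f: "e_injective_coloring V E 2 f"
    using tree_e_injective_2_coloring[OF assms] by blast
  have chi: "0 < chi_ei V E" "chi_ei V E \<le> 2" "\<exists>g. e_injective_coloring V E (chi_ei V E) g"
    using chi_ei_attained[OF f] chi_ei_le[OF f] by simp_all
  have "chi_ei V E = 1 \<longleftrightarrow> (\<exists>g. e_injective_coloring V E 1 g)"
    using chi chi_ei_le[of V E 1] by force
  also have "\<dots> \<longleftrightarrow> \<not> 3 \<le> diam V E"
    using e_injective_1_coloring_iff[of E V, OF tree_edge_in_V[OF assms]] tree_has_P4_iff_diam_ge_3[OF assms]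
    by simp
  finally show ?thesis using chi by linarith
qed

end
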